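(* A countable group $G$ (with a proper left invariant metric) is locally finite if and only if $G$ is of flat growth, i.e. $G$ is of growth type at most a constant function.
   Context: A proper left invariant metric is $d(g,h)=\|g^{-1}h\|$ for a proper norm (zero only at identity, symmetric, subadditive, finite balls). A group is locally finite if every finitely generated subgroup is finite. An $s$-scale chain of length $m$ from $x$ to $y$ is $x=x_0,\dots,x_m=y$ with $d(x_i,x_{i+1})<s$; $A_g^{(n,s)}$ is the set of $h$ joined to $g$ by an $s$-scale chain of length $n$, and $gr_{(s,g)}(n)=\#A_g^{(n,s)}$. $u\preceq v$ means there is $C>0$ with $u(x)\le Cv(Cx)$ for large $x$. $G$ is of growth type at most $f$ if $gr_{(s,g)}\preceq f$ for all $g\in G$, $s>0$. *)

theory Defs
  imports "HOL-Algebra.Algebra" "HOL-Library.Countable_Set"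
begin

definition proper_norm :: "('a, 'b) monoid_scheme \<Rightarrow> ('a \<Rightarrow> real) \<Rightarrow> bool" where
  "proper_norm G N \<longleftrightarrow>
     (\<forall>x\<in>carrier G. N x \<ge> 0) \<and>
     (\<forall>x\<in>carrier G. N x = 0 \<longleftrightarrow> x = \<one>\<^bsub>G\<^esub>) \<and>
     (\<forall>x\<in>carrier G. N (inv\<^bsub>G\<^esub> x) = N x) \<and>
     (\<forall>x\<in>carrier G. \<forall>y\<in>carrier G. N (x \<otimes>\<^bsub>G\<^esub> y) \<le> N x + N y) \<and>
     (\<forall>r::real. finite {x \<in> carrier G. N x \<le> r})"

definition norm_dist :: "('a, 'b) monoid_scheme \<Rightarrow> ('a \<Rightarrow> real) \<Rightarrow> 'a \<Rightarrow> 'a \<Rightarrow> real" where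
  "norm_dist G N g h = N (inv\<^bsub>G\<^esub> g \<otimes>\<^bsub>G\<^esub> h)"

definition locally_finite_group :: "('a, 'b) monoid_scheme \<Rightarrow> bool" where
  "locally_finite_group G \<longleftrightarrow>
     (\<forall>S. S \<subseteq> carrier G \<and> finite S \<longrightarrow> finite (generate G S))"

definition scale_chain ::
  "('a, 'b) monoid_scheme \<Rightarrow> ('a \<Rightarrow> real) \<Rightarrow> real \<Rightarrow> nat \<Rightarrow> 'a \<Rightarrow> 'a \<Rightarrow> bool" where
  "scale_chain G N s m x y \<longleftrightarrow>
     (\<exists>c :: nat \<Rightarrow> 'a. c 0 = x \<and> c m = y \<and> (\<forall>i\<le>m. c i \<in> carrier G) \<and>
        (\<forall>i<m. norm_dist G N (c i) (c (Suc i)) < s))"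

definition chain_ball ::
  "('a, 'b) monoid_scheme \<Rightarrow> ('a \<Rightarrow> real) \<Rightarrow> nat \<Rightarrow> real \<Rightarrow> 'a \<Rightarrow> 'a set" where
  "chain_ball G N n s g = {h. scale_chain G N s n g h}"

definition growth_fun ::
  "('a, 'b) monoid_scheme \<Rightarrow> ('a \<Rightarrow> real) \<Rightarrow> real \<Rightarrow> 'a \<Rightarrow> nat \<Rightarrow> real" where
  "growth_fun G N s g n = real (card (chain_ball G N n s g))"

definition growth_preceq :: "(nat \<Rightarrow> real) \<Rightarrow> (real \<Rightarrow> real) \<Rightarrow> bool" where
  "growth_preceq u v \<longleftrightarrow> (\<exists>C>0. \<forall>\<^sub>F n in sequentially. u n \<le> C * v (C * real n))"

definition growth_type_at_most ::
  "('a, 'b) monoid_scheme \<Rightarrow> ('a \<Rightarrow> real) \<Rightarrow> (real \<Rightarrow> real) \<Rightarrow> bool" where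
  "growth_type_at_most G N f \<longleftrightarrow>
     (\<forall>g\<in>carrier G. \<forall>s>0. growth_preceq (growth_fun G N s g) f)"

definition flat_growth :: "('a, 'b) monoid_scheme \<Rightarrow> ('a \<Rightarrow> real) \<Rightarrow> bool" where
  "flat_growth G N \<longleftrightarrow> (\<exists>c::real. growth_type_at_most G N (\<lambda>_. c))"

end

theory Submission
  imports Defs
begin

text \<open>Write \<open>B\<^sub>s\<close> for the open ball \<open>{x. N x < s}\<close>, a finite set since the norm is proper.
An \<open>s\<close>-scale chain starting at \<open>g\<close> multiplies \<open>g\<close> successively by elements of \<open>B\<^sub>s\<close>,
so the chain balls around \<open>g\<close> increase with the length and exhaust the coset \<open>g\<langle>B\<^sub>s\<rangle>\<close>.
If \<open>G\<close> is locally finite, \<open>\<langle>B\<^sub>s\<rangle>\<close> is finite and bounds every growth function.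
Conversely, if the growth functions at the identity are eventually bounded, the increasing
union \<open>\<langle>B\<^sub>s\<rangle>\<close> of the chain balls is finite, and every finite set lies in some \<open>B\<^sub>s\<close>.\<close>

lemma scale_chain_carrier:
  "scale_chain G N s n x y \<Longrightarrow> x \<in> carrier G \<and> y \<in> carrier G"
  unfolding scale_chain_def by auto

lemma scale_chain_0_iff: "scale_chain G N s 0 x y \<longleftrightarrow> x = y \<and> x \<in> carrier G"
  unfolding scale_chain_def by auto

lemma scale_chain_Suc_iff:
  "scale_chain G N s (Suc n) x y \<longleftrightarrow>
     (\<exists>z. scale_chain G N s n x z \<and> y \<in> carrier G \<and> norm_dist G N z y < s)"
proof
  assume "scale_chain G N s (Suc n) x y"
  then obtain c where c: "c 0 = x" "c (Suc n) = y" "\<forall>i\<le>Suc n. c i \<in> carrier G"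
    "\<forall>i<Suc n. norm_dist G N (c i) (c (Suc i)) < s"
    unfolding scale_chain_def by blast
  have "scale_chain G N s n x (c n)"
    unfolding scale_chain_def using c by (intro exI[of _ c]) auto
  with c show "\<exists>z. scale_chain G N s n x z \<and> y \<in> carrier G \<and> norm_dist G N z y < s"
    by auto
next
  assume "\<exists>z. scale_chain G N s n x z \<and> y \<in> carrier G \<and> norm_dist G N z y < s"
  then obtain c where c: "c 0 = x" "\<forall>i\<le>n. c i \<in> carrier G"
    "\<forall>i<n. norm_dist G N (c i) (c (Suc i)) < s"
    and y: "y \<in> carrier G" "norm_dist G N (c n) y < s"
    unfolding scale_chain_def by blast
  show "scale_chain G N s (Suc n) x y"
    unfolding scale_chain_def
    using c y by (intro exI[of _ "c(Suc n := y)"]) (auto simp: le_Suc_eq less_Suc_eq)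
qed

lemma scale_chain_trans:
  "scale_chain G N s m x y \<Longrightarrow> scale_chain G N s n y z \<Longrightarrow> scale_chain G N s (m + n) x z"
proof (induction n arbitrary: z)
  case 0
  then show ?case by (simp add: scale_chain_0_iff)
next
  case (Suc n)
  then obtain w where "scale_chain G N s n y w" "z \<in> carrier G" "norm_dist G N w z < s"
    by (auto simp: scale_chain_Suc_iff)
  with Suc.IH[OF Suc.prems(1)] show ?case
    by (auto simp: scale_chain_Suc_iff)
qed

lemma finite_subset_Union_mono:
  fixes B :: "nat \<Rightarrow> 'a set"
  assumes "mono B" "finite F" "F \<subseteq> (\<Union>n. B n)"
  obtains m where "F \<subseteq> B m"
proof -
  from assms(2,3) have "\<exists>m. F \<subseteq> B m"
  proof (induction F rule: finite_induct)
    case empty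
    then show ?case by blast
  next
    case (insert x F)
    then obtain m k where "F \<subseteq> B m" "x \<in> B k"
      by blast
    moreover have "B m \<subseteq> B (max m k)" "B k \<subseteq> B (max m k)"
      using monoD[OF assms(1)] by simp_all
    ultimately have "insert x F \<subseteq> B (max m k)"
      by blast
    then show ?case ..
  qed
  then show thesis
    using that by blast
qed

lemma finite_Union_mono_if_card_bounded:
  fixes B :: "nat \<Rightarrow> 'a set"
  assumes "mono B" "\<And>n. finite (B n)" and bounded: "\<forall>\<^sub>F n in sequentially. card (B n) \<le> K"
  shows "finite (\<Union>n. B n)"
proof -
  obtain n0 where n0: "\<And>n. n \<ge> n0 \<Longrightarrow> card (B n) \<le> K"
    using bounded unfolding eventually_sequentially by blast
  have "card F \<le> K" if F: "F \<subseteq> (\<Union>n. B n)" "finite F" for F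
  proof -
    obtain m where "F \<subseteq> B m"
      using finite_subset_Union_mono[OF assms(1) F(2,1)] .
    also have "B m \<subseteq> B (max m n0)"
      using monoD[OF assms(1)] by simp
    finally have "card F \<le> card (B (max m n0))"
      by (rule card_mono[OF assms(2)])
    also have "\<dots> \<le> K"
      by (rule n0) simp
    finally show ?thesis .
  qed
  then show ?thesis
    using finite_if_finite_subsets_card_bdd by blast
qed

lemma growth_preceq_const_if_bounded:
  assumes "\<And>n. u n \<le> K"
  shows "growth_preceq u (\<lambda>_. 1)"
  unfolding growth_preceq_def
proof (intro exI[of _ "max K 0 + 1"] conjI always_eventually allI)
  show "u n \<le> (max K 0 + 1) * 1" for n
    using assms[of n] by (simp add: max_def)
qed simp

locale proper_normed_group = group G for G (structure) +
  fixes N :: "'a \<Rightarrow> real"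
  assumes proper_norm: "proper_norm G N"
begin

definition open_ball :: "real \<Rightarrow> 'a set" where
  "open_ball s = {x \<in> carrier G. N x < s}"

lemma norm_one: "N \<one> = 0"
  using proper_norm unfolding proper_norm_def by blast

lemma norm_inv: "x \<in> carrier G \<Longrightarrow> N (inv x) = N x"
  using proper_norm unfolding proper_norm_def by blast

lemma open_ball_subset_carrier: "open_ball s \<subseteq> carrier G"
  by (auto simp: open_ball_def)

lemma finite_open_ball: "finite (open_ball s)"
proof -
  have "finite {x \<in> carrier G. N x \<le> s}"
    using proper_norm unfolding proper_norm_def by blast
  then show ?thesis
    unfolding open_ball_def by (rule rev_finite_subset) auto
qed

lemma finite_subset_open_ball:
  assumes "finite S" "S \<subseteq> carrier G"
  obtains s where "s > 0" "S \<subseteq> open_ball s"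
proof
  let ?M = "Max (insert 0 (N ` S))"
  have le_M: "t \<in> insert 0 (N ` S) \<Longrightarrow> t \<le> ?M" for t
    using assms(1) by (intro Max_ge) auto
  show "?M + 1 > 0"
    using le_M[of 0] by simp
  show "S \<subseteq> open_ball (?M + 1)"
  proof
    fix x
    assume x: "x \<in> S"
    then have "N x \<le> ?M"
      using le_M by blast
    with x assms(2) show "x \<in> open_ball (?M + 1)"
      unfolding open_ball_def by auto
  qed
qed

lemma norm_dist_self: "x \<in> carrier G \<Longrightarrow> norm_dist G N x x = 0"
  by (simp add: norm_dist_def norm_one)

lemma norm_dist_mult_left:
  assumes "a \<in> carrier G" "x \<in> carrier G" "y \<in> carrier G"
  shows "norm_dist G N (a \<otimes> x) (a \<otimes> y) = norm_dist G N x y"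
proof -
  have "inv (a \<otimes> x) \<otimes> (a \<otimes> y) = inv x \<otimes> ((inv a \<otimes> a) \<otimes> y)"
    using assms by (simp only: inv_mult_group m_assoc inv_closed m_closed)
  then show ?thesis
    using assms by (simp add: norm_dist_def)
qed

lemma scale_chain_const: "s > 0 \<Longrightarrow> x \<in> carrier G \<Longrightarrow> scale_chain G N s n x x"
  unfolding scale_chain_def by (intro exI[of _ "\<lambda>_. x"]) (simp add: norm_dist_self)

lemma scale_chain_mult_left:
  assumes "scale_chain G N s n x y" "a \<in> carrier G"
  shows "scale_chain G N s n (a \<otimes> x) (a \<otimes> y)"
proof -
  obtain c where c: "c 0 = x" "c n = y" "\<forall>i\<le>n. c i \<in> carrier G"
    "\<forall>i<n. norm_dist G N (c i) (c (Suc i)) < s"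
    using assms(1) unfolding scale_chain_def by blast
  show ?thesis
    unfolding scale_chain_def
    using c assms(2) by (intro exI[of _ "\<lambda>i. a \<otimes> c i"]) (simp add: norm_dist_mult_left)
qed

lemma norm_dist_mult_right:
  "z \<in> carrier G \<Longrightarrow> x \<in> carrier G \<Longrightarrow> norm_dist G N z (z \<otimes> x) = N x"
  by (simp add: norm_dist_def m_assoc[symmetric])

lemma chain_ball_Suc:
  "chain_ball G N (Suc n) s g = (\<lambda>(z, x). z \<otimes> x) ` (chain_ball G N n s g \<times> open_ball s)"
proof (intro equalityI subsetI)
  fix y
  assume "y \<in> chain_ball G N (Suc n) s g"
  then obtain z where z: "scale_chain G N s n g z" "y \<in> carrier G" "norm_dist G N z y < s"
    unfolding chain_ball_def by (auto simp: scale_chain_Suc_iff)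
  have "z \<in> carrier G"
    using scale_chain_carrier[OF z(1)] by simp
  with z have "(z, inv z \<otimes> y) \<in> chain_ball G N n s g \<times> open_ball s" "z \<otimes> (inv z \<otimes> y) = y"
    by (simp_all add: chain_ball_def open_ball_def norm_dist_def m_assoc[symmetric])
  then show "y \<in> (\<lambda>(z, x). z \<otimes> x) ` (chain_ball G N n s g \<times> open_ball s)"
    by (auto intro!: image_eqI[of _ _ "(z, inv z \<otimes> y)"])
next
  fix y
  assume "y \<in> (\<lambda>(z, x). z \<otimes> x) ` (chain_ball G N n s g \<times> open_ball s)"
  then obtain z x where "scale_chain G N s n g z" "x \<in> open_ball s" "y = z \<otimes> x"
    unfolding chain_ball_def by auto
  moreover have "z \<in> carrier G"
    using scale_chain_carrier[OF \<open>scale_chain G N s n g z\<close>] by simp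
  ultimately show "y \<in> chain_ball G N (Suc n) s g"
    unfolding chain_ball_def scale_chain_Suc_iff
    by (auto simp: open_ball_def norm_dist_mult_right)
qed

lemma finite_chain_ball: "finite (chain_ball G N n s g)"
proof (induction n)
  case 0
  have "chain_ball G N 0 s g \<subseteq> {g}"
    unfolding chain_ball_def by (auto simp: scale_chain_0_iff)
  then show ?case
    by (rule finite_subset) simp
next
  case (Suc n)
  then show ?case
    by (simp add: chain_ball_Suc finite_open_ball)
qed

lemma mono_chain_ball:
  assumes "s > 0"
  shows "mono (\<lambda>n. chain_ball G N n s g)"
proof (intro monoI subsetI)
  fix m m' y
  assume "m \<le> m'" "y \<in> chain_ball G N m s g"
  then have y: "scale_chain G N s m g y"
    unfolding chain_ball_def by simp
  have "scale_chain G N s (m' - m) y y"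
    using scale_chain_const[OF assms(1)] scale_chain_carrier[OF y] by blast
  from scale_chain_trans[OF y this] \<open>m \<le> m'\<close> show "y \<in> chain_ball G N m' s g"
    unfolding chain_ball_def by simp
qed

lemma chain_ball_subset_coset:
  assumes "g \<in> carrier G"
  shows "chain_ball G N n s g \<subseteq> (\<lambda>x. g \<otimes> x) ` generate G (open_ball s)"
proof (induction n)
  case 0
  have "g \<otimes> \<one> \<in> (\<lambda>x. g \<otimes> x) ` generate G (open_ball s)"
    by (rule imageI[OF generate.one])
  then show ?case
    using assms by (auto simp: chain_ball_def scale_chain_0_iff)
next
  case (Suc n)
  show ?case
  proof
    fix y
    assume "y \<in> chain_ball G N (Suc n) s g"
    then obtain z x where z: "z \<in> chain_ball G N n s g" and x: "x \<in> open_ball s"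
      and y: "y = z \<otimes> x"
      unfolding chain_ball_Suc by auto
    obtain w where w: "w \<in> generate G (open_ball s)" "z = g \<otimes> w"
      using Suc.IH z by blast
    have "w \<in> carrier G" "x \<in> carrier G"
      using generate_in_carrier[OF open_ball_subset_carrier w(1)] x open_ball_subset_carrier
      by auto
    then have "y = g \<otimes> (w \<otimes> x)"
      using y w(2) assms by (simp add: m_assoc)
    moreover have "w \<otimes> x \<in> generate G (open_ball s)"
      using generate.eng[OF w(1) generate.incl[OF x]] .
    ultimately show "y \<in> (\<lambda>x. g \<otimes> x) ` generate G (open_ball s)"
      by blast
  qed
qed

lemma inv_open_ball: "x \<in> open_ball s \<Longrightarrow> inv x \<in> open_ball s"
  by (simp add: open_ball_def norm_inv)

lemma scale_chain_one_step: "x \<in> open_ball s \<Longrightarrow> scale_chain G N s (Suc 0) \<one> x"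
  unfolding scale_chain_Suc_iff scale_chain_0_iff
  by (intro exI[of _ \<one>]) (simp add: open_ball_def norm_dist_def)

lemma generate_open_ball_subset_chain_balls:
  "generate G (open_ball s) \<subseteq> (\<Union>n. chain_ball G N n s \<one>)"
proof
  fix h
  assume "h \<in> generate G (open_ball s)"
  then have "\<exists>n. scale_chain G N s n \<one> h"
  proof (induction rule: generate.induct)
    case one
    have "scale_chain G N s 0 \<one> \<one>"
      by (simp add: scale_chain_0_iff)
    then show ?case ..
  next
    case (incl h)
    then have "scale_chain G N s (Suc 0) \<one> h"
      by (rule scale_chain_one_step)
    then show ?case ..
  next
    case (inv h)
    then have "scale_chain G N s (Suc 0) \<one> (inv h)"
      by (intro scale_chain_one_step inv_open_ball)
    then show ?case ..
  next
    case (eng h1 h2)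
    then obtain n1 n2 where n: "scale_chain G N s n1 \<one> h1" "scale_chain G N s n2 \<one> h2"
      by blast
    have h1: "h1 \<in> carrier G"
      using scale_chain_carrier[OF n(1)] by simp
    have "scale_chain G N s n2 h1 (h1 \<otimes> h2)"
      using scale_chain_mult_left[OF n(2) h1] h1 by simp
    with n(1) have "scale_chain G N s (n1 + n2) \<one> (h1 \<otimes> h2)"
      by (rule scale_chain_trans)
    then show ?case ..
  qed
  then show "h \<in> (\<Union>n. chain_ball G N n s \<one>)"
    unfolding chain_ball_def by blast
qed

lemma growth_fun_le_card_generate:
  assumes "g \<in> carrier G" and finite: "finite (generate G (open_ball s))"
  shows "growth_fun G N s g n \<le> card (generate G (open_ball s))"
proof -
  have "card (chain_ball G N n s g) \<le> card ((\<lambda>x. g \<otimes> x) ` generate G (open_ball s))"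
    by (rule card_mono[OF finite_imageI[OF finite] chain_ball_subset_coset[OF assms(1)]])
  also have "\<dots> \<le> card (generate G (open_ball s))"
    by (rule card_image_le[OF finite])
  finally show ?thesis
    unfolding growth_fun_def by simp
qed

lemma flat_growth_if_locally_finite:
  assumes "locally_finite_group G"
  shows "flat_growth G N"
proof -
  have "growth_preceq (growth_fun G N s g) (\<lambda>_. 1)" if "g \<in> carrier G" for g s
  proof (rule growth_preceq_const_if_bounded)
    have "finite (generate G (open_ball s))"
      using assms finite_open_ball open_ball_subset_carrier
      unfolding locally_finite_group_def by blast
    with that show "growth_fun G N s g n \<le> card (generate G (open_ball s))" for n
      by (rule growth_fun_le_card_generate)
  qed
  then show ?thesis
    unfolding flat_growth_def growth_type_at_most_def by blast
qed

lemma locally_finite_if_flat_growth: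
  assumes "flat_growth G N"
  shows "locally_finite_group G"
  unfolding locally_finite_group_def
proof (intro allI impI)
  fix S
  assume S: "S \<subseteq> carrier G \<and> finite S"
  obtain c where "growth_type_at_most G N (\<lambda>_. c)"
    using assms unfolding flat_growth_def by blast
  moreover obtain s where s: "s > 0" "S \<subseteq> open_ball s"
    using finite_subset_open_ball[of S] S by blast
  ultimately have "growth_preceq (growth_fun G N s \<one>) (\<lambda>_. c)"
    unfolding growth_type_at_most_def by (simp add: one_closed)
  then obtain C where "\<forall>\<^sub>F n in sequentially. growth_fun G N s \<one> n \<le> C * c"
    unfolding growth_preceq_def by blast
  then have "\<forall>\<^sub>F n in sequentially. card (chain_ball G N n s \<one>) \<le> nat \<lceil>C * c\<rceil>"
    unfolding growth_fun_def
    by (rule eventually_mono) (meson of_nat_le_iff order_trans real_nat_ceiling_ge)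
  then have "finite (\<Union>n. chain_ball G N n s \<one>)"
    using mono_chain_ball[OF s(1)] finite_chain_ball finite_Union_mono_if_card_bounded by blast
  moreover have "generate G S \<subseteq> (\<Union>n. chain_ball G N n s \<one>)"
    using mono_generate[OF s(2)] generate_open_ball_subset_chain_balls by (rule order_trans)
  ultimately show "finite (generate G S)"
    by (rule finite_subset[rotated])
qed

end

theorem mainTheorem18:
  fixes G :: "('a, 'b) monoid_scheme" and N :: "'a \<Rightarrow> real"
  assumes "group G" and "countable (carrier G)" and "proper_norm G N"
  shows "locally_finite_group G \<longleftrightarrow> flat_growth G N"
proof -
  interpret proper_normed_group G N
    using assms(1,3) by (rule proper_normed_group.intro[OF _ proper_normed_group_axioms.intro])
  show ?thesis
    using flat_growth_if_locally_finite locally_finite_if_flat_growth by blast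
qed

end
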